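(* Let $\mathcal{P}$ be a profile of unrooted phylogenetic trees whose display graph $G(\mathcal{P})$ is connected, and let $F\subseteq E(G(\mathcal{P}))$. Then $F$ is a legal minimal separator of $\mathrm{LG}(\mathcal{P})$ if and only if $F$ is a nice minimal cut of $G(\mathcal{P})$.
   Context: A phylogenetic tree $T$ is an unrooted tree whose leaves are bijectively labeled by a label set $\mathcal{L}(T)$ (leaves identified with labels; internal vertices have degree at least three). A profile $\mathcal{P}=\{T_1,\dots,T_k\}$ is a finite collection of phylogenetic trees; the internal vertices of distinct trees are disjoint, while leaves with the same label are the same vertex. The display graph $G(\mathcal{P})$ has vertex set $\bigcup_i V(T_i)$ and edge set $\bigcup_i E(T_i)$. For a vertex $u$ of an input tree, $\mathrm{Inc}(u)$ is the set of edges of $G(\mathcal{P})$ incident with $u$. $\mathrm{LG}(\mathcal{P})$ is the line graph of $G(\mathcal{P})$ (vertices are the edges of $G(\mathcal{P})$, adjacent iff they share an endpoint). In a graph $G$, for nonadjacent vertices $a,b$, an $a$-$b$ separator is $U\subset V(G)$ with $a,b$ in different components of $G-U$; it is minimal if no proper subset is an $a$-$b$ separator; $U$ is a minimal separator if it is a minimal $a$-$b$ separator for some nonadjacent $a,b$. A minimal separator $F$ of $\mathrm{LG}(\mathcal{P})$ is legal if for every $T\in\mathcal{P}$ all edges of $T$ lying in $F$ share a common endpoint. A cut of a connected graph $G$ is $F\subseteq E(G)$ with $G-F$ (same vertices, edges of $F$ removed) disconnected; minimal if no proper subset is a cut. A cut $F$ of $G(\mathcal{P})$ is legal if for every $T\in\mathcal{P}$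 there is $u\in V(T)$ with $F\cap E(T)\subseteq\mathrm{Inc}(u)$; it is nice if it is legal and every connected component of $G(\mathcal{P})-F$ contains at least one edge. *)

theory Defs
  imports Main
begin

type_synonym 'a graph = "'a set \<times> 'a set set"

definition gverts :: "'a graph \<Rightarrow> 'a set" where "gverts G = fst G"
definition gedges :: "'a graph \<Rightarrow> 'a set set" where "gedges G = snd G"

definition wf_graph :: "'a graph \<Rightarrow> bool" where
  "wf_graph G \<longleftrightarrow> finite (gverts G) \<and> (\<forall>e\<in>gedges G. card e = 2 \<and> e \<subseteq> gverts G)"

definition reach :: "'a set \<Rightarrow> 'a set set \<Rightarrow> 'a \<Rightarrow> 'a \<Rightarrow> bool" where
  "reach V E x y \<longleftrightarrow> x \<in> V \<and> (\<lambda>u w. u \<in> V \<and> w \<in> V \<and> {u, w} \<in> E)\<^sup>*\<^sup>* x y"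

definition connected_graph :: "'a graph \<Rightarrow> bool" where
  "connected_graph G \<longleftrightarrow> gverts G \<noteq> {} \<and>
     (\<forall>x\<in>gverts G. \<forall>y\<in>gverts G. reach (gverts G) (gedges G) x y)"

definition is_tree :: "'a graph \<Rightarrow> bool" where
  "is_tree T \<longleftrightarrow> wf_graph T \<and> connected_graph T \<and>
     (\<forall>e\<in>gedges T. \<not> connected_graph (gverts T, gedges T - {e}))"

definition degree :: "'a graph \<Rightarrow> 'a \<Rightarrow> nat" where
  "degree G v = card {e \<in> gedges G. v \<in> e}"

definition leaves :: "'a graph \<Rightarrow> 'a set" where
  "leaves T = {v \<in> gverts T. degree T v \<le> 1}"

definition phylo_tree :: "'a graph \<Rightarrow> bool" where
  "phylo_tree T \<longleftrightarrow> is_tree T \<and> (\<forall>v \<in> gverts T - leaves T. degree T v \<ge> 3)"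

text \<open>A profile: finite collection of phylogenetic trees; vertices shared by distinct trees
  must be leaves (labels) of both, i.e. internal vertices are disjoint.\<close>
definition profile :: "'a graph set \<Rightarrow> bool" where
  "profile P \<longleftrightarrow> finite P \<and> (\<forall>T\<in>P. phylo_tree T) \<and>
     (\<forall>T\<in>P. \<forall>T'\<in>P. T \<noteq> T' \<longrightarrow> gverts T \<inter> gverts T' \<subseteq> leaves T \<inter> leaves T')"

definition display_graph :: "'a graph set \<Rightarrow> 'a graph" where
  "display_graph P = (\<Union>T\<in>P. gverts T, \<Union>T\<in>P. gedges T)"

definition Inc :: "'a graph set \<Rightarrow> 'a \<Rightarrow> 'a set set" where
  "Inc P u = {e \<in> gedges (display_graph P). u \<in> e}"

definition line_graph :: "'a graph \<Rightarrow> 'a set graph" where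
  "line_graph G = (gedges G, {{e, f} | e f. e \<in> gedges G \<and> f \<in> gedges G \<and> e \<noteq> f \<and> e \<inter> f \<noteq> {}})"

definition delete_verts :: "'a graph \<Rightarrow> 'a set \<Rightarrow> 'a graph" where
  "delete_verts G U = (gverts G - U, {e \<in> gedges G. e \<inter> U = {}})"

definition is_ab_separator :: "'a graph \<Rightarrow> 'a \<Rightarrow> 'a \<Rightarrow> 'a set \<Rightarrow> bool" where
  "is_ab_separator G a b U \<longleftrightarrow> U \<subseteq> gverts G \<and> a \<in> gverts G - U \<and> b \<in> gverts G - U \<and>
     \<not> reach (gverts (delete_verts G U)) (gedges (delete_verts G U)) a b"

definition is_min_ab_separator :: "'a graph \<Rightarrow> 'a \<Rightarrow> 'a \<Rightarrow> 'a set \<Rightarrow> bool" where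
  "is_min_ab_separator G a b U \<longleftrightarrow> is_ab_separator G a b U \<and>
     (\<forall>U'. U' \<subset> U \<longrightarrow> \<not> is_ab_separator G a b U')"

definition is_min_separator :: "'a graph \<Rightarrow> 'a set \<Rightarrow> bool" where
  "is_min_separator G U \<longleftrightarrow> (\<exists>a b. a \<in> gverts G \<and> b \<in> gverts G \<and> a \<noteq> b \<and>
     {a, b} \<notin> gedges G \<and> is_min_ab_separator G a b U)"

definition legal_min_separator :: "'a graph set \<Rightarrow> 'a set set \<Rightarrow> bool" where
  "legal_min_separator P F \<longleftrightarrow> is_min_separator (line_graph (display_graph P)) F \<and>
     (\<forall>T\<in>P. \<exists>u. \<forall>e \<in> F \<inter> gedges T. u \<in> e)"

definition is_cut :: "'a graph \<Rightarrow> 'a set set \<Rightarrow> bool" where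
  "is_cut G F \<longleftrightarrow> F \<subseteq> gedges G \<and> \<not> connected_graph (gverts G, gedges G - F)"

definition is_min_cut :: "'a graph \<Rightarrow> 'a set set \<Rightarrow> bool" where
  "is_min_cut G F \<longleftrightarrow> is_cut G F \<and> (\<forall>F'. F' \<subset> F \<longrightarrow> \<not> is_cut G F')"

definition legal_cut :: "'a graph set \<Rightarrow> 'a set set \<Rightarrow> bool" where
  "legal_cut P F \<longleftrightarrow> is_cut (display_graph P) F \<and>
     (\<forall>T\<in>P. \<exists>u\<in>gverts T. F \<inter> gedges T \<subseteq> Inc P u)"

text \<open>Nice cut: legal, and every connected component of G - F contains an edge.\<close>
definition nice_cut :: "'a graph set \<Rightarrow> 'a set set \<Rightarrow> bool" where
  "nice_cut P F \<longleftrightarrow> legal_cut P F \<and>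
     (let G = display_graph P in
      \<forall>v\<in>gverts G. \<exists>e\<in>gedges G - F. \<forall>x\<in>e. reach (gverts G) (gedges G - F) v x)"

definition nice_min_cut :: "'a graph set \<Rightarrow> 'a set set \<Rightarrow> bool" where
  "nice_min_cut P F \<longleftrightarrow> nice_cut P F \<and> is_min_cut (display_graph P) F"

end

theory Submission
  imports Defs
begin

text \<open>Two edges of \<open>G\<close> are joined by a path of \<open>LG(G) - U\<close> exactly when their endpoints are
  joined in \<open>G - U\<close>. Hence an edge set \<open>F\<close> separating the edges \<open>a\<close>, \<open>b\<close> of the line graph
  separates their endpoints in \<open>G\<close>, and minimality means that re-inserting any \<open>f \<in> F\<close> reconnects
  them, so \<open>f\<close> runs from the component of \<open>a\<close> to that of \<open>b\<close>. Every vertex then lies in one of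
  these two components: \<open>F\<close> is a minimal cut, and every component contains an edge. Conversely,
  two edges taken from the two sides of a nice minimal cut are nonadjacent, and \<open>F\<close> is a minimal
  separator of them in the line graph. Legality has the same meaning for separators and cuts.\<close>

lemma reach_induct [consumes 1, case_names base step]:
  assumes "reach V E x y"
    and "P x"
    and "\<And>y z. reach V E x y \<Longrightarrow> P y \<Longrightarrow> y \<in> V \<Longrightarrow> z \<in> V \<Longrightarrow> {y, z} \<in> E \<Longrightarrow> P z"
  shows "P y"
proof -
  have "(\<lambda>u w. u \<in> V \<and> w \<in> V \<and> {u, w} \<in> E)\<^sup>*\<^sup>* x y" and "x \<in> V"
    using assms(1) by (auto simp: reach_def)
  then have "reach V E x y \<and> P y"
  proof (induction rule: rtranclp_induct)
    case base
    then show ?case using assms(2) by (simp add: reach_def)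
  next
    case (step y z)
    from step have "reach V E x z"
      by (auto simp: reach_def intro: rtranclp.rtrancl_into_rtrancl)
    with step show ?case using assms(3) by blast
  qed
  then show ?thesis ..
qed

lemma reach_refl: "x \<in> V \<Longrightarrow> reach V E x x"
  by (simp add: reach_def)

lemma reach_step: "u \<in> V \<Longrightarrow> w \<in> V \<Longrightarrow> {u, w} \<in> E \<Longrightarrow> reach V E u w"
  by (auto simp: reach_def)

lemma reach_trans: "reach V E x y \<Longrightarrow> reach V E y z \<Longrightarrow> reach V E x z"
  by (auto simp: reach_def)

lemma reach_sym:
  assumes "reach V E x y"
  shows "reach V E y x"
  using assms
proof (induction rule: reach_induct)
  case base
  show ?case using assms by (simp add: reach_def)
next
  case (step y z)
  then have "reach V E z y" by (intro reach_step) (auto simp: insert_commute)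
  then show ?case using step.IH by (rule reach_trans)
qed

lemma reach_mono:
  assumes "E \<subseteq> E'" and "reach V E x y"
  shows "reach V E' x y"
  using assms(2)
proof (induction rule: reach_induct)
  case base
  show ?case using assms(2) by (simp add: reach_def)
next
  case (step y z)
  then have "reach V E' y z" using assms(1) by (intro reach_step) auto
  with step.IH show ?case by (rule reach_trans)
qed

lemma reach_edge:
  assumes "e \<in> E" "e \<subseteq> V" "card e = 2" "x \<in> e" "y \<in> e"
  shows "reach V E x y"
proof (cases "x = y")
  case True
  then show ?thesis using assms by (auto intro: reach_refl)
next
  case False
  then have "e = {x, y}" using assms(3-5) by (auto simp: card_2_iff)
  then show ?thesis using assms(1,2) by (auto intro: reach_step)
qed

lemma reach_insert_edgeD:
  assumes "reach V (insert f E) x y"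
  shows "reach V E x y \<or> (\<exists>u\<in>f. \<exists>v\<in>f. reach V E x u \<and> reach V E v y)"
  using assms
proof (induction rule: reach_induct)
  case base
  show ?case using assms by (simp add: reach_def)
next
  case (step y z)
  have z: "reach V E z z" using step by (simp add: reach_refl)
  show ?case
  proof (cases "{y, z} \<in> E")
    case True
    then have "reach V E y z" using step by (intro reach_step) auto
    with step.IH show ?thesis using reach_trans by metis
  next
    case False
    then have "y \<in> f" "z \<in> f" using step by auto
    with step.IH z show ?thesis by blast
  qed
qed

lemma connected_graphI:
  assumes "x \<in> V" and "\<And>w. w \<in> V \<Longrightarrow> reach V E x w"
  shows "connected_graph (V, E)"
  unfolding connected_graph_def gverts_def gedges_def
  using assms reach_sym reach_trans by fastforce

lemma connected_graph_reach:
  "connected_graph (V, E) \<Longrightarrow> x \<in> V \<Longrightarrow> y \<in> V \<Longrightarrow> reach V E x y"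
  by (simp add: connected_graph_def gverts_def gedges_def)

lemma wf_graph_edge:
  assumes "wf_graph G" "e \<in> gedges G"
  shows "card e = 2" "e \<subseteq> gverts G"
  using assms by (auto simp: wf_graph_def)

lemma wf_graph_edge_nonempty: "wf_graph G \<Longrightarrow> e \<in> gedges G \<Longrightarrow> e \<noteq> {}"
  using wf_graph_edge(1)[of G e] by auto

lemma reach_in_edge:
  assumes "wf_graph G" "e \<in> gedges G - F" "x \<in> e" "y \<in> e"
  shows "reach (gverts G) (gedges G - F) x y"
  using assms wf_graph_edge[OF assms(1)] by (intro reach_edge) auto

abbreviation reach_deleted :: "'a graph \<Rightarrow> 'a set \<Rightarrow> 'a \<Rightarrow> 'a \<Rightarrow> bool" where
  "reach_deleted G U \<equiv> reach (gverts (delete_verts G U)) (gedges (delete_verts G U))"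

lemma gverts_line_graph: "gverts (line_graph G) = gedges G"
  by (simp add: line_graph_def gverts_def)

lemma gverts_delete_line_graph: "gverts (delete_verts (line_graph G) U) = gedges G - U"
  by (simp add: delete_verts_def line_graph_def gedges_def gverts_def)

lemma edge_delete_line_graph_iff:
  assumes "e \<in> gedges G - U" "f \<in> gedges G - U"
  shows "{e, f} \<in> gedges (delete_verts (line_graph G) U) \<longleftrightarrow> e \<noteq> f \<and> e \<inter> f \<noteq> {}"
  using assms by (auto simp: delete_verts_def line_graph_def gedges_def doubleton_eq_iff)

lemma edge_line_graph_disjoint:
  assumes "e \<inter> f = {}"
  shows "{e, f} \<notin> gedges (line_graph G)"
  using assms by (auto simp: line_graph_def gedges_def doubleton_eq_iff)

lemma reach_deleted_line_graph_intersecting: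
  assumes "e \<in> gedges G - U" "f \<in> gedges G - U" "e \<inter> f \<noteq> {}"
  shows "reach_deleted (line_graph G) U e f"
proof (cases "e = f")
  case True
  then show ?thesis using assms by (simp add: reach_refl gverts_delete_line_graph)
next
  case False
  then show ?thesis
    using assms edge_delete_line_graph_iff[of e G U f]
    by (intro reach_step) (auto simp: gverts_delete_line_graph)
qed

lemma reach_of_reach_deleted_line_graph:
  assumes "wf_graph G" "reach_deleted (line_graph G) U e f" "x \<in> e" "y \<in> f"
  shows "reach (gverts G) (gedges G - U) x y"
  using assms(2,4)
proof (induction arbitrary: y rule: reach_induct)
  case base
  have "e \<in> gedges G - U"
    using assms(2) by (simp add: reach_def gverts_delete_line_graph)
  then show ?case using assms(1,3) base by (simp add: reach_in_edge)
next
  case (step g h)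
  then have h: "h \<in> gedges G - U" and "g \<inter> h \<noteq> {}"
    using step edge_delete_line_graph_iff[of g G U h] by (auto simp: gverts_delete_line_graph)
  then obtain z where "z \<in> g" "z \<in> h" by blast
  from \<open>z \<in> g\<close> have "reach (gverts G) (gedges G - U) x z" by (rule step.IH)
  moreover have "reach (gverts G) (gedges G - U) z y"
    using assms(1) h \<open>z \<in> h\<close> step.prems by (simp add: reach_in_edge)
  ultimately show ?case by (rule reach_trans)
qed

lemma reach_deleted_line_graph_of_reach:
  assumes "reach (gverts G) (gedges G - U) x y"
    and "e \<in> gedges G - U" "f \<in> gedges G - U" "x \<in> e" "y \<in> f"
  shows "reach_deleted (line_graph G) U e f"
  using assms(1,3,5)
proof (induction arbitrary: f rule: reach_induct)
  case base
  then show ?case using assms(2,4) by (intro reach_deleted_line_graph_intersecting) auto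
next
  case (step y z)
  then have yz: "{y, z} \<in> gedges G - U" by blast
  have "reach_deleted (line_graph G) U e {y, z}" using step.IH[OF yz] by simp
  moreover have "reach_deleted (line_graph G) U {y, z} f"
    using yz step.prems by (intro reach_deleted_line_graph_intersecting) auto
  ultimately show ?case by (rule reach_trans)
qed

lemma reach_deleted_line_graph_iff:
  assumes "wf_graph G" "e \<in> gedges G - U" "f \<in> gedges G - U" "x \<in> e" "y \<in> f"
  shows "reach_deleted (line_graph G) U e f \<longleftrightarrow> reach (gverts G) (gedges G - U) x y"
  using assms reach_of_reach_deleted_line_graph reach_deleted_line_graph_of_reach by metis

lemma reach_from_either_root:
  assumes "reach V E x w"
    and "\<not> reach V E' x y"
    and bridge: "\<And>f. f \<in> E - E' \<Longrightarrow> \<exists>u\<in>f. \<exists>v\<in>f. reach V E' x u \<and> reach V E' v y"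
  shows "reach V E' x w \<or> reach V E' y w"
  using assms(1)
proof (induction rule: reach_induct)
  case base
  show ?case using assms(1) by (simp add: reach_def)
next
  case (step w z)
  show ?case
  proof (cases "{w, z} \<in> E'")
    case True
    then have wz: "reach V E' w z" using step by (intro reach_step) auto
    show ?thesis using step.IH reach_trans[OF _ wz] by blast
  next
    case False
    with \<open>{w, z} \<in> E\<close> have "{w, z} \<in> E - E'" by blast
    then obtain u v where uv: "u \<in> {w, z}" "v \<in> {w, z}" "reach V E' x u" "reach V E' v y"
      by (rule bridge[THEN bexE]) blast
    have "u \<noteq> v" using assms(2) reach_trans[OF uv(3)] uv(4) by auto
    then have "z = u \<or> z = v" using uv(1,2) by auto
    then show ?thesis using uv(3) reach_sym[OF uv(4)] by auto
  qed
qed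

lemma min_cut_if_bridged:
  assumes wf: "wf_graph G" and conn: "connected_graph G" and FE: "F \<subseteq> gedges G"
    and xy: "x \<in> gverts G" "y \<in> gverts G" "\<not> reach (gverts G) (gedges G - F) x y"
    and bridge: "\<And>f. f \<in> F \<Longrightarrow>
      \<exists>u\<in>f. \<exists>v\<in>f. reach (gverts G) (gedges G - F) x u \<and> reach (gverts G) (gedges G - F) v y"
  shows "is_min_cut G F"
    and "\<forall>w\<in>gverts G. reach (gverts G) (gedges G - F) x w \<or> reach (gverts G) (gedges G - F) y w"
proof -
  let ?V = "gverts G" and ?E = "gedges G"
  show split: "\<forall>w\<in>?V. reach ?V (?E - F) x w \<or> reach ?V (?E - F) y w"
  proof
    fix w assume "w \<in> ?V"
    with conn xy(1) have "reach ?V ?E x w"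
      by (simp add: connected_graph_def)
    then show "reach ?V (?E - F) x w \<or> reach ?V (?E - F) y w"
      using xy(3) bridge by (rule reach_from_either_root) auto
  qed
  have cut: "is_cut G F"
    using FE connected_graph_reach[OF _ xy(1,2)] xy(3) unfolding is_cut_def by blast
  show "is_min_cut G F"
    unfolding is_min_cut_def
  proof (intro conjI allI impI cut)
    fix F' assume "F' \<subset> F"
    then obtain f where f: "f \<in> F" "f \<notin> F'" by blast
    have mono: "reach ?V (?E - F') u v" if "reach ?V (?E - F) u v" for u v
      by (rule reach_mono[OF _ that]) (use \<open>F' \<subset> F\<close> in blast)
    obtain u v where uv: "u \<in> f" "v \<in> f" "reach ?V (?E - F) x u" "reach ?V (?E - F) v y"
      using bridge[OF f(1)] by blast
    have "reach ?V (?E - F') u v"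
      using wf f FE uv(1,2) by (intro reach_in_edge) auto
    then have xy': "reach ?V (?E - F') x y"
      using reach_trans[OF mono[OF uv(3)]] reach_trans[OF _ mono[OF uv(4)]] by blast
    have "reach ?V (?E - F') x w" if "w \<in> ?V" for w
      using split that mono reach_trans[OF xy'] by blast
    then have "connected_graph (?V, ?E - F')" by (rule connected_graphI[OF xy(1)])
    then show "\<not> is_cut G F'" by (simp add: is_cut_def)
  qed
qed

lemma min_cut_if_min_separator_line_graph:
  assumes wf: "wf_graph G" and conn: "connected_graph G" and FE: "F \<subseteq> gedges G"
    and sep: "is_min_separator (line_graph G) F"
  shows "is_min_cut G F"
    and "\<forall>v\<in>gverts G. \<exists>e\<in>gedges G - F. \<forall>x\<in>e. reach (gverts G) (gedges G - F) v x"
proof -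
  let ?V = "gverts G" and ?E = "gedges G" and ?LG = "line_graph G"
  obtain a b where "is_min_ab_separator ?LG a b F"
    using sep unfolding is_min_separator_def by blast
  then have ab: "a \<in> ?E - F" "b \<in> ?E - F" "\<not> reach_deleted ?LG F a b"
    and minimal: "\<And>U. U \<subset> F \<Longrightarrow> \<not> is_ab_separator ?LG a b U"
    unfolding is_min_ab_separator_def is_ab_separator_def gverts_line_graph by blast+
  obtain x y where "x \<in> a" "y \<in> b"
    using wf_graph_edge_nonempty[OF wf, of a] wf_graph_edge_nonempty[OF wf, of b] ab(1,2) by blast
  note edge_xy = reach_deleted_line_graph_iff[OF wf _ _ \<open>x \<in> a\<close> \<open>y \<in> b\<close>]
  have xy: "x \<in> ?V" "y \<in> ?V" "\<not> reach ?V (?E - F) x y"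
    using wf_graph_edge(2)[OF wf] ab \<open>x \<in> a\<close> \<open>y \<in> b\<close> edge_xy[OF ab(1,2)] by blast+
  have bridge: "\<exists>u\<in>f. \<exists>v\<in>f. reach ?V (?E - F) x u \<and> reach ?V (?E - F) v y" if "f \<in> F" for f
  proof -
    have "\<not> is_ab_separator ?LG a b (F - {f})" using that by (intro minimal) auto
    moreover have ab': "a \<in> ?E - (F - {f})" "b \<in> ?E - (F - {f})" using ab(1,2) by auto
    ultimately have "reach_deleted ?LG (F - {f}) a b"
      using FE unfolding is_ab_separator_def gverts_line_graph by blast
    then have "reach ?V (?E - (F - {f})) x y" using edge_xy[OF ab'] by blast
    then have "reach ?V (insert f (?E - F)) x y" by (rule reach_mono[rotated]) auto
    then show ?thesis using reach_insert_edgeD xy(3) by metis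
  qed
  show "is_min_cut G F"
    using xy bridge by (rule min_cut_if_bridged[OF wf conn FE])
  have split: "\<forall>w\<in>?V. reach ?V (?E - F) x w \<or> reach ?V (?E - F) y w"
    using xy bridge by (rule min_cut_if_bridged[OF wf conn FE])
  have from_x: "reach ?V (?E - F) x z" if "z \<in> a" for z
    by (rule reach_in_edge[OF wf ab(1) \<open>x \<in> a\<close> that])
  have from_y: "reach ?V (?E - F) y z" if "z \<in> b" for z
    by (rule reach_in_edge[OF wf ab(2) \<open>y \<in> b\<close> that])
  show "\<forall>v\<in>?V. \<exists>e\<in>?E - F. \<forall>z\<in>e. reach ?V (?E - F) v z"
  proof
    fix v assume "v \<in> ?V"
    with split consider "reach ?V (?E - F) x v" | "reach ?V (?E - F) y v" by blast
    then show "\<exists>e\<in>?E - F. \<forall>z\<in>e. reach ?V (?E - F) v z"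
    proof cases
      case 1
      then show ?thesis using ab(1) from_x reach_trans[OF reach_sym[OF 1]] by blast
    next
      case 2
      then show ?thesis using ab(2) from_y reach_trans[OF reach_sym[OF 2]] by blast
    qed
  qed
qed

lemma min_separator_line_graph_if_nice_min_cut:
  assumes wf: "wf_graph G" and conn: "connected_graph G"
    and cut: "is_min_cut G F"
    and nice: "\<forall>v\<in>gverts G. \<exists>e\<in>gedges G - F. \<forall>x\<in>e. reach (gverts G) (gedges G - F) v x"
  shows "is_min_separator (line_graph G) F"
proof -
  let ?V = "gverts G" and ?E = "gedges G" and ?LG = "line_graph G"
  have FE: "F \<subseteq> ?E" and disconnected: "\<not> connected_graph (?V, ?E - F)"
    using cut by (simp_all add: is_min_cut_def is_cut_def)
  have "?V \<noteq> {}" using conn by (simp add: connected_graph_def)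
  with disconnected obtain x0 y0 where xy0: "x0 \<in> ?V" "y0 \<in> ?V" "\<not> reach ?V (?E - F) x0 y0"
    by (auto simp: connected_graph_def gverts_def gedges_def)
  obtain a where a: "a \<in> ?E - F" "\<And>z. z \<in> a \<Longrightarrow> reach ?V (?E - F) x0 z"
    using nice xy0(1) by blast
  obtain b where b: "b \<in> ?E - F" "\<And>z. z \<in> b \<Longrightarrow> reach ?V (?E - F) y0 z"
    using nice xy0(2) by blast
  have disjoint: "a \<inter> b = {}"
  proof (rule equals0I)
    fix z assume "z \<in> a \<inter> b"
    then have "reach ?V (?E - F) x0 y0"
      using reach_trans[OF a(2) reach_sym[OF b(2)]] by blast
    with xy0(3) show False ..
  qed
  obtain x y where "x \<in> a" "y \<in> b"
    using wf_graph_edge_nonempty[OF wf, of a] wf_graph_edge_nonempty[OF wf, of b] a(1) b(1) by blast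
  note edge_xy = reach_deleted_line_graph_iff[OF wf _ _ \<open>x \<in> a\<close> \<open>y \<in> b\<close>]
  have "\<not> reach ?V (?E - F) x y"
  proof
    assume "reach ?V (?E - F) x y"
    then have "reach ?V (?E - F) x0 y0"
      using reach_trans[OF reach_trans[OF a(2)[OF \<open>x \<in> a\<close>]] reach_sym[OF b(2)[OF \<open>y \<in> b\<close>]]]
      by blast
    with xy0(3) show False ..
  qed
  then have separator: "is_ab_separator ?LG a b F"
    using FE a(1) b(1) edge_xy[OF a(1) b(1)] unfolding is_ab_separator_def gverts_line_graph by blast
  have "\<not> is_ab_separator ?LG a b U" if "U \<subset> F" for U
  proof
    assume U: "is_ab_separator ?LG a b U"
    obtain f where f: "f \<in> F" "f \<notin> U" using \<open>U \<subset> F\<close> by blast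
    then have "\<not> is_cut G (F - {f})" using cut unfolding is_min_cut_def by blast
    then have "connected_graph (?V, ?E - (F - {f}))" using FE unfolding is_cut_def by blast
    moreover have "x \<in> ?V" "y \<in> ?V"
      using a(1) b(1) \<open>x \<in> a\<close> \<open>y \<in> b\<close> wf_graph_edge(2)[OF wf] by blast+
    ultimately have "reach ?V (?E - (F - {f})) x y" by (rule connected_graph_reach)
    then have "reach ?V (?E - U) x y" by (rule reach_mono[rotated]) (use \<open>U \<subset> F\<close> f in blast)
    moreover have "a \<in> ?E - U" "b \<in> ?E - U"
      using U unfolding is_ab_separator_def gverts_line_graph by blast+
    ultimately have "reach_deleted ?LG U a b" using edge_xy by blast
    then show False using U unfolding is_ab_separator_def by blast
  qed
  then have "is_min_ab_separator ?LG a b F"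
    using separator unfolding is_min_ab_separator_def by blast
  moreover have "a \<noteq> b" using disjoint \<open>x \<in> a\<close> by blast
  moreover have "{a, b} \<notin> gedges ?LG" using disjoint by (rule edge_line_graph_disjoint)
  ultimately show ?thesis
    using a(1) b(1) unfolding is_min_separator_def gverts_line_graph by blast
qed

lemma min_separator_line_graph_iff_nice_min_cut:
  assumes "wf_graph G" "connected_graph G" "F \<subseteq> gedges G"
  shows "is_min_separator (line_graph G) F \<longleftrightarrow>
    is_min_cut G F \<and> (\<forall>v\<in>gverts G. \<exists>e\<in>gedges G - F. \<forall>x\<in>e. reach (gverts G) (gedges G - F) v x)"
  using min_cut_if_min_separator_line_graph[OF assms]
    min_separator_line_graph_if_nice_min_cut[OF assms(1,2)] by blast

lemma gverts_display_graph: "gverts (display_graph P) = (\<Union>T\<in>P. gverts T)"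
  by (simp add: display_graph_def gverts_def)

lemma gedges_display_graph: "gedges (display_graph P) = (\<Union>T\<in>P. gedges T)"
  by (simp add: display_graph_def gedges_def)

lemma profile_wf_graph: "profile P \<Longrightarrow> T \<in> P \<Longrightarrow> wf_graph T"
  unfolding profile_def phylo_tree_def is_tree_def by blast

lemma profile_gverts_nonempty: "profile P \<Longrightarrow> T \<in> P \<Longrightarrow> gverts T \<noteq> {}"
  unfolding profile_def phylo_tree_def is_tree_def connected_graph_def by blast

lemma wf_graph_display_graph:
  assumes "profile P"
  shows "wf_graph (display_graph P)"
  unfolding wf_graph_def gverts_display_graph gedges_display_graph
proof (intro conjI ballI)
  show "finite (\<Union>T\<in>P. gverts T)"
    using assms profile_wf_graph[OF assms] unfolding profile_def wf_graph_def by blast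
next
  fix e assume "e \<in> (\<Union>T\<in>P. gedges T)"
  then obtain T where "T \<in> P" "e \<in> gedges T" by blast
  note edge = wf_graph_edge[OF profile_wf_graph[OF assms \<open>T \<in> P\<close>] \<open>e \<in> gedges T\<close>]
  show "card e = 2" by (rule edge(1))
  show "e \<subseteq> (\<Union>T\<in>P. gverts T)" using edge(2) \<open>T \<in> P\<close> by blast
qed

lemma common_endpoint_iff_Inc:
  assumes "wf_graph T" "gverts T \<noteq> {}" "F \<subseteq> gedges (display_graph P)"
  shows "(\<exists>u. \<forall>e\<in>F \<inter> gedges T. u \<in> e) \<longleftrightarrow> (\<exists>u\<in>gverts T. F \<inter> gedges T \<subseteq> Inc P u)"
proof
  assume "\<exists>u. \<forall>e\<in>F \<inter> gedges T. u \<in> e"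
  then obtain u where u: "\<forall>e\<in>F \<inter> gedges T. u \<in> e" by blast
  show "\<exists>u\<in>gverts T. F \<inter> gedges T \<subseteq> Inc P u"
  proof (cases "F \<inter> gedges T = {}")
    case True
    then show ?thesis using assms(2) by auto
  next
    case False
    then have "u \<in> gverts T" using u wf_graph_edge(2)[OF assms(1)] by blast
    moreover have "F \<inter> gedges T \<subseteq> Inc P u" using u assms(3) by (auto simp: Inc_def)
    ultimately show ?thesis by blast
  qed
qed (auto simp: Inc_def)

theorem lemma2:
  fixes P :: "'a graph set" and F :: "'a set set"
  assumes "profile P"
    and "connected_graph (display_graph P)"
    and "F \<subseteq> gedges (display_graph P)"
  shows "legal_min_separator P F \<longleftrightarrow> nice_min_cut P F"
proof -
  have legal: "(\<forall>T\<in>P. \<exists>u. \<forall>e\<in>F \<inter> gedges T. u \<in> e) \<longleftrightarrow>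
      (\<forall>T\<in>P. \<exists>u\<in>gverts T. F \<inter> gedges T \<subseteq> Inc P u)"
    using common_endpoint_iff_Inc[OF profile_wf_graph profile_gverts_nonempty assms(3)] assms(1)
    by (intro ball_cong) auto
  show ?thesis
    unfolding legal_min_separator_def nice_min_cut_def nice_cut_def legal_cut_def Let_def legal
      min_separator_line_graph_iff_nice_min_cut[OF wf_graph_display_graph[OF assms(1)] assms(2,3)]
    unfolding is_min_cut_def by blast
qed

end
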